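(* If $n>k>\ell\geq t+2$, then $r_2(n,k,\ell,t)>r_2(n,\ell,k,t)$, where $r_2(n,k,\ell,t)=S(n-t-1,k-t-1)\big((t+1)S(n-t,\ell-t)-tS(n-t-1,\ell-t-1)\big)$.
   Context: $S(n,k)$ denotes the Stirling number of the second kind, the number of partitions of an $n$-element set into $k$ nonempty blocks. *)

theory Defs
  imports "HOL-Combinatorics.Stirling"
begin

definition r2 :: "nat \<Rightarrow> nat \<Rightarrow> nat \<Rightarrow> nat \<Rightarrow> int" where
  "r2 n k l t = int (Stirling (n - t - 1) (k - t - 1)) *
     (int (t + 1) * int (Stirling (n - t) (l - t)) - int t * int (Stirling (n - t - 1) (l - t - 1)))"

end

theory Submission
  imports Defs
begin

text \<open>With m = n-t-1, a = k-t-1, b = l-t-1, the recurrence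
  S(m+1,j+1) = (j+1) S(m,j+1) + S(m,j) turns the difference r2(n,k,l,t) - r2(n,l,k,t) into
  (t+1) ((b+1) S(m,b+1) S(m,a) - (a+1) S(m,b) S(m,a+1)), so for 0 < b < a < m it suffices that
  the row of Stirling numbers satisfies a strict ratio inequality. Multiplying by b! a! turns it
  into the inequality T(m,b) T(m,a+1) < T(m,b+1) T(m,a) for the numbers T(m,j) = j! S(m,j) of
  surjections onto a j-set. Their recurrence T(m+1,j+1) = (j+1) (T(m,j+1) + T(m,j)) preserves
  the property that T(m,j+1) / T(m,j) decreases in j, since both j+1 and the sum of consecutive
  terms of a sequence with that property have it again.\<close>

lemma Stirling_pos: "0 < j \<Longrightarrow> j \<le> m \<Longrightarrow> 0 < Stirling m j"
proof (induction m arbitrary: j)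
  case 0
  then show ?case by simp
next
  case (Suc m)
  then obtain i where j: "j = Suc i" by (cases j) auto
  show ?case
  proof (cases i)
    case 0
    then show ?thesis using j Stirling_1[of m] by (simp only:)
  next
    case (Suc i')
    then have "0 < Stirling m i" using Suc.IH Suc.prems j by simp
    then show ?thesis using j by simp
  qed
qed

text \<open>The cross-multiplied form of ``x (Suc j) / x j is antitone'', meaningful also where x vanishes.\<close>
definition ratio_antimono :: "(nat \<Rightarrow> 'a::ordered_comm_semiring) \<Rightarrow> bool" where
  "ratio_antimono x \<longleftrightarrow> (\<forall>i j. i \<le> j \<longrightarrow> x i * x (Suc j) \<le> x (Suc i) * x j)"

lemma ratio_antimono_shift_add:
  assumes "ratio_antimono x"
  shows "ratio_antimono (\<lambda>i. x (Suc i) + x i)"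
  unfolding ratio_antimono_def
proof (intro allI impI)
  fix i j :: nat
  assume "i \<le> j"
  have x: "x i' * x (Suc j') \<le> x (Suc i') * x j'" if "i' \<le> j'" for i' j'
    using assms that unfolding ratio_antimono_def by blast
  have "x i * x (Suc (Suc j)) \<le> x (Suc (Suc i)) * x j"
  proof (cases "i = j")
    case True
    then show ?thesis by (simp add: mult.commute)
  next
    case False
    have "x i * x (Suc (Suc j)) \<le> x (Suc i) * x (Suc j)" using x \<open>i \<le> j\<close> by simp
    also have "\<dots> \<le> x (Suc (Suc i)) * x j" using x \<open>i \<le> j\<close> False by simp
    finally show ?thesis .
  qed
  moreover have "x (Suc i) * x (Suc (Suc j)) \<le> x (Suc (Suc i)) * x (Suc j)" using x \<open>i \<le> j\<close> by simp
  moreover have "x i * x (Suc j) \<le> x (Suc i) * x j" using x \<open>i \<le> j\<close> by simp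
  ultimately show "(x (Suc i) + x i) * (x (Suc (Suc j)) + x (Suc j))
      \<le> (x (Suc (Suc i)) + x (Suc i)) * (x (Suc j) + x j)"
    by (simp add: algebra_simps add_mono)
qed

definition surj_count :: "nat \<Rightarrow> nat \<Rightarrow> nat" where
  "surj_count m j = fact j * Stirling m j"

lemma surj_count_Suc_Suc: "surj_count (Suc m) (Suc j) = Suc j * (surj_count m (Suc j) + surj_count m j)"
  by (simp add: surj_count_def algebra_simps)

lemma surj_count_pos: "0 < j \<Longrightarrow> j \<le> m \<Longrightarrow> 0 < surj_count m j"
  by (simp add: surj_count_def Stirling_pos)

lemma surj_count_cross_Suc:
  "surj_count (Suc m) (Suc i) * surj_count (Suc m) (Suc (Suc j)) =
   (Suc i * Suc (Suc j)) * ((surj_count m (Suc i) + surj_count m i) *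
     (surj_count m (Suc (Suc j)) + surj_count m (Suc j)))"
  by (simp only: surj_count_Suc_Suc) (simp add: algebra_simps)

lemma ratio_antimono_surj_count: "ratio_antimono (surj_count m)"
proof (induction m)
  case 0
  then show ?case by (simp add: ratio_antimono_def surj_count_def le_Suc_eq)
next
  case (Suc m)
  have sum_le: "(surj_count m (Suc i) + surj_count m i) * (surj_count m (Suc (Suc j)) + surj_count m (Suc j))
      \<le> (surj_count m (Suc (Suc i)) + surj_count m (Suc i)) * (surj_count m (Suc j) + surj_count m j)"
    if "i \<le> j" for i j
    using ratio_antimono_shift_add[OF Suc.IH] that unfolding ratio_antimono_def by blast
  show ?case
    unfolding ratio_antimono_def
  proof (intro allI impI)
    fix i j :: nat
    assume ij: "i \<le> j"
    show "surj_count (Suc m) i * surj_count (Suc m) (Suc j) \<le> surj_count (Suc m) (Suc i) * surj_count (Suc m) j"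
    proof (cases i)
      case 0
      then show ?thesis by (simp add: surj_count_def)
    next
      case (Suc i')
      with ij obtain j' where j: "j = Suc j'" and ij': "i' \<le> j'" by (cases j) auto
      have "Suc i' * Suc (Suc j') \<le> Suc (Suc i') * Suc j'" using ij' by simp
      then have "surj_count (Suc m) (Suc i') * surj_count (Suc m) (Suc (Suc j'))
          \<le> Suc (Suc i') * Suc j' * ((surj_count m (Suc (Suc i')) + surj_count m (Suc i')) *
             (surj_count m (Suc j') + surj_count m j'))"
        unfolding surj_count_cross_Suc by (rule mult_le_mono[OF _ sum_le[OF ij']])
      also have "\<dots> = surj_count (Suc m) (Suc (Suc i')) * surj_count (Suc m) (Suc j')"
        by (simp only: surj_count_Suc_Suc) (simp add: algebra_simps)
      finally show ?thesis using Suc j by simp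
    qed
  qed
qed

lemma surj_count_cross_less:
  assumes "0 < b" "b < a" "a < m"
  shows "surj_count m b * surj_count m (Suc a) < surj_count m (Suc b) * surj_count m a"
proof -
  obtain m' where m: "m = Suc m'" using assms by (cases m) auto
  obtain i where b: "b = Suc i" using assms by (cases b) auto
  obtain j where a: "a = Suc j" using assms by (cases a) auto
  have sum_le: "(surj_count m' (Suc i) + surj_count m' i) * (surj_count m' (Suc (Suc j)) + surj_count m' (Suc j))
      \<le> (surj_count m' (Suc (Suc i)) + surj_count m' (Suc i)) * (surj_count m' (Suc j) + surj_count m' j)"
    using ratio_antimono_shift_add[OF ratio_antimono_surj_count] assms a b
    unfolding ratio_antimono_def by simp
  have sum_pos: "0 < (surj_count m' (Suc (Suc i)) + surj_count m' (Suc i)) * (surj_count m' (Suc j) + surj_count m' j)"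
    using surj_count_pos[of "Suc i" m'] surj_count_pos[of "Suc j" m'] assms a b m by simp
  have "surj_count m b * surj_count m (Suc a)
      \<le> Suc i * Suc (Suc j) * ((surj_count m' (Suc (Suc i)) + surj_count m' (Suc i)) *
         (surj_count m' (Suc j) + surj_count m' j))"
    unfolding m a b surj_count_cross_Suc by (rule mult_le_mono2[OF sum_le])
  also have "\<dots> < Suc (Suc i) * Suc j * ((surj_count m' (Suc (Suc i)) + surj_count m' (Suc i)) *
         (surj_count m' (Suc j) + surj_count m' j))"
    using assms a b by (intro mult_strict_right_mono sum_pos) simp_all
  also have "\<dots> = surj_count m (Suc b) * surj_count m a"
    unfolding m a b by (simp only: surj_count_Suc_Suc) (simp add: algebra_simps)
  finally show ?thesis .
qed

lemma Stirling_cross_less: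
  assumes "0 < b" "b < a" "a < m"
  shows "Suc a * Stirling m b * Stirling m (Suc a) < Suc b * Stirling m (Suc b) * Stirling m a"
proof -
  have "fact b * fact a * (Suc a * Stirling m b * Stirling m (Suc a)) = surj_count m b * surj_count m (Suc a)"
    by (simp add: surj_count_def algebra_simps)
  also have "\<dots> < surj_count m (Suc b) * surj_count m a"
    using assms by (rule surj_count_cross_less)
  also have "\<dots> = fact b * fact a * (Suc b * Stirling m (Suc b) * Stirling m a)"
    by (simp add: surj_count_def algebra_simps)
  finally show ?thesis by simp
qed

lemma r2_shift:
  "r2 (m + t + 1) (a + t + 1) (b + t + 1) t =
     int (Stirling m a) * (int (t + 1) * int (Suc b) * int (Stirling m (Suc b)) + int (Stirling m b))"
  by (simp add: r2_def algebra_simps)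

theorem mainTheorem20:
  fixes n k l t :: nat
  assumes "n > k" and "k > l" and "l \<ge> t + 2"
  shows "r2 n k l t > r2 n l k t"
proof -
  define m a b where "m = n - t - 1" and "a = k - t - 1" and "b = l - t - 1"
  have nkl: "n = m + t + 1" "k = a + t + 1" "l = b + t + 1" and bam: "0 < b" "b < a" "a < m"
    using assms unfolding m_def a_def b_def by auto
  have "int (Suc a * Stirling m b * Stirling m (Suc a)) < int (Suc b * Stirling m (Suc b) * Stirling m a)"
    using Stirling_cross_less[OF bam] by (simp only: of_nat_less_iff)
  then have "int (t + 1) * int (Suc a * Stirling m b * Stirling m (Suc a))
      < int (t + 1) * int (Suc b * Stirling m (Suc b) * Stirling m a)"
    by (intro mult_strict_left_mono) auto
  then show ?thesis
    unfolding nkl r2_shift by (simp add: algebra_simps)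
qed

end
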